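(* Let $f:\mathbb{R}^+\to\mathbb{R}^+$ be a non-decreasing convex function with $f(0)=1$. Then for every integer $n\ge0$ there exists a complex Borel measure $\mu$ on the unit circle $\mathbb{T}$ such that $\hat\mu(k)=f(|k|)$ for all integers $|k|\le n$, and $\|\mu\|\le f(n)^2$ (total variation norm).
   Context: For a measure $\mu$ on $\mathbb{T}$, $\hat\mu(k)=\int_{\mathbb{T}} z^{-k}\,d\mu(z)$, $k\in\mathbb{Z}$. *)

theory Defs
  imports "HOL-Analysis.Analysis"
begin

definition circle_borel :: "complex measure" where
  "circle_borel = restrict_space borel (sphere 0 1)"

text \<open>Complex Borel measures on T are represented by densities: a pair (nu, h) with nu a finite
  positive Borel measure on T and h a nu-integrable complex function represents the complex
  measure  A \<mapsto> integral of h over A w.r.t. nu.  Every complex Borel measure mu arises this way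
  (take nu = |mu| and h = d mu / d|mu|, Radon-Nikodym/polar decomposition), and every such pair
  defines a complex Borel measure.\<close>
definition cmeasure_rep :: "complex measure \<Rightarrow> (complex \<Rightarrow> complex) \<Rightarrow> bool" where
  "cmeasure_rep \<nu> h \<longleftrightarrow> sets \<nu> = sets circle_borel \<and> finite_measure \<nu> \<and> integrable \<nu> h"

definition cm_fourier :: "complex measure \<Rightarrow> (complex \<Rightarrow> complex) \<Rightarrow> int \<Rightarrow> complex" where
  "cm_fourier \<nu> h k = integral\<^sup>L \<nu> (\<lambda>z. z powi (- k) * h z)"

definition cm_total_variation :: "complex measure \<Rightarrow> (complex \<Rightarrow> complex) \<Rightarrow> real" where
  "cm_total_variation \<nu> h = integral\<^sup>L \<nu> (\<lambda>z. norm (h z))"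

end

theory Submission
  imports Defs "HOL-Library.Real_Mod"
begin

text \<open>Let F s = f s and c s = F (s + 1) - 2 F s + F (s - 1), with F (-1) = F 0. Monotonicity
  and convexity make every c s nonnegative, and F a = 1 + (\<Sum>s<n. c s * max 0 (a - s)) for a \<le> n.
  The Fejer kernel K_r(z) = |1 + z + ... + z^(r-1)|^2 has Fourier coefficients max 0 (r - |m|), so
  the density (z^n + z^(-n)) K_(n-s)(z) has coefficients max 0 (|k| - s) for |k| \<le> n and mass
  at most 2 (n - s). Hence the unit point mass at 1 plus \<Sum>s<n. c s (z^n + z^(-n)) K_(n-s)(z)
  has coefficients F |k| and total variation at most 1 + 2 (F n - 1) \<le> (F n)^2.
  All densities involved are trigonometric polynomials of degree below 2 n, so for |k| \<le> n
  their coefficients are computed exactly by the normalized counting measure on the N-th roots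
  of unity once N > 3 n; the measure constructed is therefore supported on these N points.\<close>

lemma measurable_powi [measurable]: "(\<lambda>z::complex. z powi m) \<in> borel_measurable borel"
  by (cases "m \<ge> 0") (simp_all add: power_int_def)

definition root_of_unity :: "nat \<Rightarrow> nat \<Rightarrow> complex" where
  "root_of_unity N j = cis (2 * pi / N) ^ j"

lemma norm_root_of_unity [simp]: "norm (root_of_unity N j) = 1"
  by (simp add: root_of_unity_def norm_power)

lemma root_of_unity_0 [simp]: "root_of_unity N 0 = 1"
  by (simp add: root_of_unity_def)

lemma root_of_unity_nonzero [simp]: "root_of_unity N j \<noteq> 0"
  using norm_root_of_unity[of N j] by (metis norm_zero zero_neq_one)

lemma cis_powi_eq_1_iff:
  assumes "N > 0"
  shows "cis (2 * pi / N) powi d = 1 \<longleftrightarrow> int N dvd d"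
proof -
  have "cis (2 * pi / N) powi d = 1 \<longleftrightarrow> (\<exists>m::int. of_int d * (2 * pi / N) = of_int m * (2 * pi))"
    unfolding cis_power_int cis_eq_1_iff ..
  also have "\<dots> \<longleftrightarrow> (\<exists>m::int. real_of_int d = real_of_int (m * int N))"
    using assms by (intro ex_cong1) (auto simp: field_simps)
  also have "\<dots> \<longleftrightarrow> int N dvd d"
    unfolding of_int_eq_iff by (auto simp: dvd_def mult.commute)
  finally show ?thesis .
qed

lemma root_of_unity_eq_1_iff:
  assumes "j < N"
  shows "root_of_unity N j = 1 \<longleftrightarrow> j = 0"
  using cis_powi_eq_1_iff[of N "int j"] assms
  by (auto simp: root_of_unity_def dest: zdvd_imp_le)

lemma sum_root_of_unity_powi:
  assumes "N > 0"
  shows "(\<Sum>j<N. root_of_unity N j powi m) = (if int N dvd m then of_nat N else 0)"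
proof -
  define q where "q = cis (2 * pi / N) powi m"
  have powers: "root_of_unity N j powi m = q ^ j" for j
    unfolding q_def root_of_unity_def
    by (metis mult.commute power_int_mult power_int_of_nat)
  have "q ^ N = 1"
    using cis_powi_eq_1_iff[OF assms, of "m * int N"] assms
    by (simp add: q_def power_int_mult[symmetric] mult.commute flip: power_int_of_nat)
  moreover have "q = 1 \<longleftrightarrow> int N dvd m"
    unfolding q_def by (rule cis_powi_eq_1_iff[OF assms])
  ultimately show ?thesis
    unfolding powers by (auto simp: sum_gp_strict)
qed

lemma sum_root_of_unity_powi_small:
  assumes "\<bar>m\<bar> < int N"
  shows "(\<Sum>j<N. root_of_unity N j powi m) = (if m = 0 then of_nat N else 0)"
  using assms sum_root_of_unity_powi[of N m] dvd_imp_le_int[of m "int N"] by auto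

lemma count_index_eq:
  "(\<Sum>i<r. if int i = (a::int) then 1 else 0) = (if 0 \<le> a \<and> a < int r then 1 else (0::nat))"
  by (induction r) auto

lemma count_pairs_with_difference:
  "(\<Sum>i<r. \<Sum>l<r. if int i - int l = c then 1 else 0) = nat (int r - \<bar>c\<bar>)"
proof (induction r)
  case 0
  then show ?case by simp
next
  case (Suc r)
  have last_column: "(\<Sum>i<r. if int i - int r = c then 1 else 0)
      = (if - int r \<le> c \<and> c < 0 then 1 else (0::nat))"
    using count_index_eq[where r=r and a="c + int r"] by (simp add: algebra_simps eq_diff_eq)
  have last_row: "(\<Sum>l<r. if int r - int l = c then 1 else 0)
      = (if 0 < c \<and> c \<le> int r then 1 else (0::nat))"
  proof -
    have "(\<Sum>l<r. if int r - int l = c then 1 else 0)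
        = (\<Sum>l<r. if int l = int r - c then 1 else (0::nat))"
      by (intro sum.cong) auto
    then show ?thesis using count_index_eq[where r=r and a="int r - c"] by auto
  qed
  have "(\<Sum>i<Suc r. \<Sum>l<Suc r. if int i - int l = c then 1 else 0)
      = (\<Sum>i<r. \<Sum>l<r. if int i - int l = c then 1 else 0)
        + (\<Sum>i<r. if int i - int r = c then 1 else 0)
        + (\<Sum>l<r. if int r - int l = c then 1 else 0) + (if c = 0 then 1 else (0::nat))"
    by (simp add: sum.distrib)
  also have "\<dots> = nat (int (Suc r) - \<bar>c\<bar>)"
    unfolding Suc.IH last_column last_row by auto
  finally show ?case .
qed

text \<open>This is r times the usual Fejer kernel.\<close>
definition fejer_kernel :: "nat \<Rightarrow> complex \<Rightarrow> complex" where
  "fejer_kernel r z = (\<Sum>i<r. \<Sum>l<r. z powi (int i - int l))"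

lemma fejer_kernel_unit_circle:
  assumes "norm z = 1"
  shows "fejer_kernel r z = of_real ((norm (\<Sum>i<r. z ^ i))\<^sup>2)"
proof -
  have "z \<noteq> 0" using assms by auto
  have "inverse z = cnj z"
    using assms complex_div_cnj[of 1 z] by (simp add: divide_inverse)
  then have "z powi (int i - int l) = z ^ i * cnj (z ^ l)" for i l
    using \<open>z \<noteq> 0\<close> by (simp add: power_int_diff divide_inverse flip: power_inverse complex_cnj_power)
  then show ?thesis
    unfolding fejer_kernel_def complex_norm_square cnj_sum sum_product by simp
qed

lemma sum_root_of_unity_fejer_kernel:
  assumes "\<bar>c\<bar> + int r \<le> int N"
  shows "(\<Sum>j<N. root_of_unity N j powi c * fejer_kernel r (root_of_unity N j))
           = of_nat (N * nat (int r - \<bar>c\<bar>))"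
proof -
  have "(\<Sum>j<N. root_of_unity N j powi c * fejer_kernel r (root_of_unity N j))
      = (\<Sum>i<r. \<Sum>l<r. \<Sum>j<N. root_of_unity N j powi (c + (int i - int l)))"
    unfolding fejer_kernel_def
    by (simp add: sum_distrib_left power_int_add sum.swap[of _ "{..<N}"])
  also have "\<dots> = (\<Sum>i<r. \<Sum>l<r. of_nat N * of_nat (if int i - int l = - c then 1 else 0))"
  proof (intro sum.cong refl)
    fix i l assume "i \<in> {..<r}" "l \<in> {..<r}"
    then have "\<bar>c + (int i - int l)\<bar> < int N" using assms by auto
    then show "(\<Sum>j<N. root_of_unity N j powi (c + (int i - int l)))
        = of_nat N * of_nat (if int i - int l = - c then 1 else 0)"
      by (subst sum_root_of_unity_powi_small) auto
  qed
  also have "\<dots> = of_nat (N * nat (int r - \<bar>c\<bar>))"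
    using count_pairs_with_difference[where r=r and c="- c"]
    by (simp add: sum_distrib_left[symmetric] of_nat_sum[symmetric] del: of_nat_sum)
  finally show ?thesis .
qed

definition roots_of_unity_measure :: "nat \<Rightarrow> complex measure" where
  "roots_of_unity_measure N = distr (count_space {..<N}) circle_borel (root_of_unity N)"

lemma measurable_root_of_unity: "root_of_unity N \<in> count_space {..<N} \<rightarrow>\<^sub>M circle_borel"
  by (simp add: circle_borel_def space_restrict_space)

lemma integral_roots_of_unity_measure:
  fixes g :: "complex \<Rightarrow> 'b::{banach, second_countable_topology}"
  assumes "g \<in> borel_measurable borel"
  shows "integral\<^sup>L (roots_of_unity_measure N) g = (\<Sum>j<N. g (root_of_unity N j))"
proof -
  have "g \<in> borel_measurable circle_borel"
    unfolding circle_borel_def by (rule measurable_restrict_space1[OF assms])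
  then show ?thesis
    unfolding roots_of_unity_measure_def
    by (simp add: integral_distr[OF measurable_root_of_unity] lebesgue_integral_count_space_finite)
qed

lemma cmeasure_rep_roots_of_unity_measure:
  assumes "h \<in> borel_measurable borel"
  shows "cmeasure_rep (roots_of_unity_measure N) h"
  unfolding cmeasure_rep_def
proof (intro conjI)
  show "sets (roots_of_unity_measure N) = sets circle_borel"
    by (simp add: roots_of_unity_measure_def)
  show "finite_measure (roots_of_unity_measure N)"
    unfolding roots_of_unity_measure_def
    by (rule finite_measure.finite_measure_distr[OF finite_measure_count_space measurable_root_of_unity]) simp
  have "h \<in> borel_measurable circle_borel"
    unfolding circle_borel_def by (rule measurable_restrict_space1[OF assms])
  then show "integrable (roots_of_unity_measure N) h"
    unfolding roots_of_unity_measure_def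
    by (subst integrable_distr_eq[OF measurable_root_of_unity]) (auto intro: integrable_count_space)
qed

lemma cm_fourier_roots_of_unity_measure:
  assumes "h \<in> borel_measurable borel"
  shows "cm_fourier (roots_of_unity_measure N) h k
           = (\<Sum>j<N. root_of_unity N j powi (- k) * h (root_of_unity N j))"
  unfolding cm_fourier_def using assms by (intro integral_roots_of_unity_measure) measurable

lemma cm_total_variation_roots_of_unity_measure:
  assumes "h \<in> borel_measurable borel"
  shows "cm_total_variation (roots_of_unity_measure N) h = (\<Sum>j<N. norm (h (root_of_unity N j)))"
  unfolding cm_total_variation_def using assms by (intro integral_roots_of_unity_measure) measurable

text \<open>A density with respect to the counting measure on the N-th roots of unity, so the first
  summand is the unit point mass at 1.\<close>
definition fejer_density :: "nat \<Rightarrow> nat \<Rightarrow> (nat \<Rightarrow> real) \<Rightarrow> complex \<Rightarrow> complex" where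
  "fejer_density N n w z = (if z = 1 then 1 else 0)
     + (\<Sum>s<n. of_real (w s) * ((z powi int n + z powi - int n) * fejer_kernel (n - s) z)) / of_nat N"

lemma measurable_fejer_density: "fejer_density N n w \<in> borel_measurable borel"
  unfolding fejer_density_def fejer_kernel_def by measurable

lemma sum_root_of_unity_eq_1:
  assumes "N > 0"
  shows "(\<Sum>j<N. if root_of_unity N j = 1 then c else 0) = c"
proof -
  have "(\<Sum>j<N. if root_of_unity N j = 1 then c else 0) = (\<Sum>j<N. if j = 0 then c else 0)"
    by (intro sum.cong) (auto simp: root_of_unity_eq_1_iff)
  then show ?thesis using assms by simp
qed

lemma sum_root_of_unity_modulated_fejer_kernel:
  assumes "3 * n < N" and "\<bar>k\<bar> \<le> int n" and "s < n"
  shows "(\<Sum>j<N. root_of_unity N j powi (- k)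
             * ((root_of_unity N j powi int n + root_of_unity N j powi - int n)
                * fejer_kernel (n - s) (root_of_unity N j)))
           = of_nat (N * (nat \<bar>k\<bar> - s))"
proof -
  let ?K = "\<lambda>c. \<Sum>j<N. root_of_unity N j powi c * fejer_kernel (n - s) (root_of_unity N j)"
  have "(\<Sum>j<N. root_of_unity N j powi (- k)
             * ((root_of_unity N j powi int n + root_of_unity N j powi - int n)
                * fejer_kernel (n - s) (root_of_unity N j)))
      = ?K (int n - k) + ?K (- int n - k)"
    by (simp add: sum.distrib algebra_simps power_int_diff power_int_minus divide_inverse)
  also have "\<dots> = of_nat (N * nat (int (n - s) - \<bar>int n - k\<bar>))
                  + of_nat (N * nat (int (n - s) - \<bar>- int n - k\<bar>))"
    using assms by (subst (1 2) sum_root_of_unity_fejer_kernel) auto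
  also have "\<dots> = of_nat (N * (nat (int (n - s) - \<bar>int n - k\<bar>)
                                + nat (int (n - s) - \<bar>- int n - k\<bar>)))"
    by (simp add: distrib_left)
  also have "nat (int (n - s) - \<bar>int n - k\<bar>) + nat (int (n - s) - \<bar>- int n - k\<bar>) = nat \<bar>k\<bar> - s"
    using assms by auto
  finally show ?thesis .
qed

lemma sum_norm_fejer_kernel:
  assumes "r \<le> N"
  shows "(\<Sum>j<N. norm (fejer_kernel r (root_of_unity N j))) = real (N * r)"
proof -
  have "of_real (\<Sum>j<N. norm (fejer_kernel r (root_of_unity N j)))
      = (\<Sum>j<N. root_of_unity N j powi 0 * fejer_kernel r (root_of_unity N j))"
    by (simp add: fejer_kernel_unit_circle norm_power)
  also have "\<dots> = of_nat (N * r)"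
    using assms by (subst sum_root_of_unity_fejer_kernel) auto
  finally show ?thesis
    by (metis of_real_eq_iff of_real_of_nat_eq)
qed

lemma cm_fourier_fejer_density:
  assumes "3 * n < N" and "\<bar>k\<bar> \<le> int n"
  shows "cm_fourier (roots_of_unity_measure N) (fejer_density N n w) k
           = of_real (1 + (\<Sum>s<n. w s * real (nat \<bar>k\<bar> - s)))"
proof -
  have "N > 0" using assms by simp
  define x where "x = root_of_unity N"
  define M where "M s z = (z powi int n + z powi - int n) * fejer_kernel (n - s) z" for s z
  have "cm_fourier (roots_of_unity_measure N) (fejer_density N n w) k
      = (\<Sum>j<N. x j powi (- k) * (if x j = 1 then 1 else 0))
        + (\<Sum>j<N. x j powi (- k) * (\<Sum>s<n. of_real (w s) * M s (x j))) / of_nat N"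
    unfolding cm_fourier_roots_of_unity_measure[OF measurable_fejer_density] fejer_density_def
      x_def M_def
    by (simp add: distrib_left sum.distrib flip: sum_divide_distrib)
  also have "(\<Sum>j<N. x j powi (- k) * (\<Sum>s<n. of_real (w s) * M s (x j)))
      = (\<Sum>s<n. of_real (w s) * (\<Sum>j<N. x j powi (- k) * M s (x j)))"
    by (simp add: sum_distrib_left mult.left_commute sum.swap[of _ "{..<N}"])
  also have "\<dots> = (\<Sum>s<n. of_real (w s) * of_nat (N * (nat \<bar>k\<bar> - s)))"
    using sum_root_of_unity_modulated_fejer_kernel[OF assms] unfolding x_def M_def
    by (intro sum.cong) auto
  also have "(\<Sum>j<N. x j powi (- k) * (if x j = 1 then 1 else 0)) = (\<Sum>j<N. if x j = 1 then 1 else 0)"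
    by (intro sum.cong) auto
  also have "\<dots> = 1"
    unfolding x_def using \<open>N > 0\<close> by (rule sum_root_of_unity_eq_1)
  also have "(\<Sum>s<n. of_real (w s) * of_nat (N * (nat \<bar>k\<bar> - s)))
      = (of_nat N :: complex) * of_real (\<Sum>s<n. w s * real (nat \<bar>k\<bar> - s))"
    by (simp add: sum_distrib_left mult.left_commute)
  also have "1 + of_nat N * of_real (\<Sum>s<n. w s * real (nat \<bar>k\<bar> - s)) / of_nat N
      = (of_real (1 + (\<Sum>s<n. w s * real (nat \<bar>k\<bar> - s))) :: complex)"
    using \<open>N > 0\<close> by simp
  finally show ?thesis .
qed

lemma cm_total_variation_fejer_density:
  assumes "n < N" and w_nonneg: "\<And>s. w s \<ge> 0"
  shows "cm_total_variation (roots_of_unity_measure N) (fejer_density N n w)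
           \<le> 1 + 2 * (\<Sum>s<n. w s * real (n - s))"
proof -
  define x where "x = root_of_unity N"
  define K where "K s z = norm (fejer_kernel (n - s) z)" for s z
  have pointwise: "norm (fejer_density N n w (x j))
      \<le> (if x j = 1 then 1 else 0) + (\<Sum>s<n. w s * (2 * K s (x j))) / real N" for j
  proof -
    have "norm (x j powi int n + x j powi - int n) \<le> 2"
      using norm_triangle_ineq[of "x j powi int n" "x j powi - int n"]
      by (simp add: x_def norm_power_int norm_power)
    then have "norm (of_real (w s) * ((x j powi int n + x j powi - int n) * fejer_kernel (n - s) (x j)))
        \<le> w s * (2 * K s (x j))" for s
      unfolding K_def norm_mult using w_nonneg[of s]
      by (auto intro!: mult_left_mono mult_right_mono)
    then have "norm (\<Sum>s<n. of_real (w s) * ((x j powi int n + x j powi - int n) * fejer_kernel (n - s) (x j)))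
        \<le> (\<Sum>s<n. w s * (2 * K s (x j)))"
      by (intro order_trans[OF norm_sum sum_mono])
    then show ?thesis
      unfolding fejer_density_def
      by (intro order_trans[OF norm_triangle_ineq add_mono])
        (auto simp: norm_divide divide_right_mono)
  qed
  have "cm_total_variation (roots_of_unity_measure N) (fejer_density N n w)
      \<le> (\<Sum>j<N. (if x j = 1 then 1 else 0) + (\<Sum>s<n. w s * (2 * K s (x j))) / real N)"
    unfolding cm_total_variation_roots_of_unity_measure[OF measurable_fejer_density]
    using pointwise by (simp add: x_def sum_mono)
  also have "\<dots> = 1 + (\<Sum>s<n. w s * (2 * (\<Sum>j<N. K s (x j)))) / real N"
    using assms unfolding x_def
    by (simp add: sum.distrib sum_root_of_unity_eq_1 sum_distrib_left sum.swap[of _ "{..<N}"]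
        flip: sum_divide_distrib)
  also have "\<dots> = 1 + 2 * (\<Sum>s<n. w s * real (n - s))"
    using assms unfolding K_def x_def
    by (simp add: sum_norm_fejer_kernel mult.left_commute[of _ "real N"] flip: sum_distrib_left)
      (simp add: sum_distrib_left algebra_simps)
  finally show ?thesis .
qed

text \<open>At s = 0 the truncated subtraction s - 1 = 0 makes this the initial slope F 1 - F 0.\<close>
definition second_difference :: "(nat \<Rightarrow> real) \<Rightarrow> nat \<Rightarrow> real" where
  "second_difference F s = F (Suc s) - 2 * F s + F (s - 1)"

lemma sum_second_difference: "(\<Sum>s<a. second_difference F s) = F a - F (a - 1)"
  by (induction a) (auto simp: second_difference_def)

lemma sum_second_difference_weighted:
  "F a = F 0 + (\<Sum>s<a. second_difference F s * real (a - s))"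
proof (induction a)
  case 0
  then show ?case by simp
next
  case (Suc a)
  have "(\<Sum>s<Suc a. second_difference F s * real (Suc a - s))
      = (\<Sum>s<Suc a. second_difference F s * real (a - s) + second_difference F s)"
    by (intro sum.cong) (auto simp: Suc_diff_le algebra_simps)
  also have "\<dots> = (\<Sum>s<a. second_difference F s * real (a - s)) + (F (Suc a) - F a)"
    by (simp only: sum.distrib sum_second_difference) simp
  also have "\<dots> = F (Suc a) - F 0"
    using Suc.IH by simp
  finally show ?case by simp
qed

lemma sum_second_difference_truncated:
  assumes "a \<le> n"
  shows "F a = F 0 + (\<Sum>s<n. second_difference F s * real (a - s))"
proof -
  have "(\<Sum>s<n. second_difference F s * real (a - s)) = (\<Sum>s<a. second_difference F s * real (a - s))"
    using assms by (intro sum.mono_neutral_right) auto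
  then show ?thesis by (metis sum_second_difference_weighted)
qed

lemma second_difference_nonneg:
  fixes f :: "real \<Rightarrow> real"
  assumes mono: "mono_on {0..} f" and conv: "convex_on {0..} f"
  shows "second_difference (\<lambda>s. f (real s)) s \<ge> 0"
proof (cases s)
  case 0
  have "f 0 \<le> f 1" by (rule mono_onD[OF mono]) auto
  then show ?thesis using 0 by (simp add: second_difference_def)
next
  case (Suc t)
  have "f ((1 - 1/2) *\<^sub>R real (Suc s) + (1/2) *\<^sub>R real t)
      \<le> (1 - 1/2) * f (real (Suc s)) + (1/2) * f (real t)"
    by (rule convex_onD[OF conv]) auto
  moreover have "(1 - 1/2) *\<^sub>R real (Suc s) + (1/2) *\<^sub>R real t = real s"
    using Suc by (simp add: field_simps)
  ultimately show ?thesis using Suc by (simp add: second_difference_def)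
qed

theorem lemma3p1:
  fixes f :: "real \<Rightarrow> real" and n :: nat
  assumes pos: "\<forall>x\<ge>0. f x \<ge> 0"
    and mono: "mono_on {0..} f"
    and conv: "convex_on {0..} f"
    and f0: "f 0 = 1"
  shows "\<exists>\<nu> h. cmeasure_rep \<nu> h
           \<and> (\<forall>k::int. \<bar>k\<bar> \<le> int n \<longrightarrow> cm_fourier \<nu> h k = complex_of_real (f (real_of_int \<bar>k\<bar>)))
           \<and> cm_total_variation \<nu> h \<le> (f (real n))\<^sup>2"
proof -
  define F where "F s = f (real s)" for s
  define w where "w = second_difference F"
  define N where "N = 3 * n + 1"
  have w_nonneg: "w s \<ge> 0" for s
    unfolding w_def F_def by (rule second_difference_nonneg[OF mono conv])
  have F_eq: "F a = 1 + (\<Sum>s<n. w s * real (a - s))" if "a \<le> n" for a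
    using sum_second_difference_truncated[OF that, of F] f0 by (simp add: w_def F_def)
  have "cmeasure_rep (roots_of_unity_measure N) (fejer_density N n w)"
    by (rule cmeasure_rep_roots_of_unity_measure[OF measurable_fejer_density])
  moreover have "cm_fourier (roots_of_unity_measure N) (fejer_density N n w) k = of_real (f \<bar>k\<bar>)"
    if "\<bar>k\<bar> \<le> int n" for k
    using cm_fourier_fejer_density[of n N k w] F_eq[of "nat \<bar>k\<bar>"] that
    by (simp add: N_def F_def)
  moreover have "cm_total_variation (roots_of_unity_measure N) (fejer_density N n w) \<le> (f n)\<^sup>2"
  proof -
    have "cm_total_variation (roots_of_unity_measure N) (fejer_density N n w) \<le> 1 + 2 * (F n - 1)"
      using cm_total_variation_fejer_density[of n N w] w_nonneg F_eq[of n] by (simp add: N_def)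
    also have "\<dots> \<le> (F n)\<^sup>2"
      using zero_le_power2[of "F n - 1"] by (simp add: power2_diff)
    finally show ?thesis by (simp add: F_def)
  qed
  ultimately show ?thesis by blast
qed

end
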